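(* Let $M$ be a loopless matroid and let $F$ be a flat of $M$. If either the restriction $M|F$ or the contraction $M/F$ has a non-standard rank-preserving rainbow circuit-free coloring, then so does $M$.
   Context: A coloring of the ground set is a partition into nonempty color classes; it is rainbow circuit-free if no circuit has all its elements of pairwise different colors, and rank-preserving if the number of colors equals the rank of the matroid. A coloring of a rank-$r$ matroid $N$ with color classes $S_1,\dots,S_r$ is standard if, after possibly reindexing the classes, $S_i$ is a cut of the restriction $N|(S_1\cup\dots\cup S_i)$ for every $i=1,\dots,r$, where a cut is an inclusionwise minimal subset of the ground set intersecting every basis. A flat is a set $F$ with $r_M(F+e)>r_M(F)$ for all $e\notin F$. *)

theory Defs
  imports Main "HOL-Library.Disjoint_Sets"
begin

definition matroid :: "'a set \<Rightarrow> 'a set set \<Rightarrow> bool" where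
  "matroid E I \<longleftrightarrow> finite E \<and> (\<forall>X\<in>I. X \<subseteq> E) \<and> {} \<in> I \<and>
     (\<forall>X Y. X \<in> I \<and> Y \<subseteq> X \<longrightarrow> Y \<in> I) \<and>
     (\<forall>X\<in>I. \<forall>Y\<in>I. card X < card Y \<longrightarrow> (\<exists>e\<in>Y - X. insert e X \<in> I))"

definition mrank :: "'a set set \<Rightarrow> 'a set \<Rightarrow> nat" where
  "mrank I X = Max (card ` {Y. Y \<subseteq> X \<and> Y \<in> I})"

definition basis :: "'a set set \<Rightarrow> 'a set \<Rightarrow> bool" where
  "basis I B \<longleftrightarrow> B \<in> I \<and> (\<forall>X\<in>I. B \<subseteq> X \<longrightarrow> X = B)"

definition circuit :: "'a set \<Rightarrow> 'a set set \<Rightarrow> 'a set \<Rightarrow> bool" where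
  "circuit E I C \<longleftrightarrow> C \<subseteq> E \<and> C \<notin> I \<and> (\<forall>x\<in>C. C - {x} \<in> I)"

definition loopless :: "'a set \<Rightarrow> 'a set set \<Rightarrow> bool" where
  "loopless E I \<longleftrightarrow> (\<forall>e\<in>E. {e} \<in> I)"

definition flat :: "'a set \<Rightarrow> 'a set set \<Rightarrow> 'a set \<Rightarrow> bool" where
  "flat E I F \<longleftrightarrow> F \<subseteq> E \<and> (\<forall>e\<in>E - F. mrank I (insert e F) > mrank I F)"

definition restr_indep :: "'a set set \<Rightarrow> 'a set \<Rightarrow> 'a set set" where
  "restr_indep I F = {X \<in> I. X \<subseteq> F}"

definition contr_indep :: "'a set \<Rightarrow> 'a set set \<Rightarrow> 'a set \<Rightarrow> 'a set set" where
  "contr_indep E I F = {X. X \<subseteq> E - F \<and> mrank I (X \<union> F) = card X + mrank I F}"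

definition coloring :: "'a set \<Rightarrow> 'a set set \<Rightarrow> bool" where
  "coloring E P \<longleftrightarrow> partition_on E P"

definition rainbow_circuit_free :: "'a set \<Rightarrow> 'a set set \<Rightarrow> 'a set set \<Rightarrow> bool" where
  "rainbow_circuit_free E I P \<longleftrightarrow>
     \<not> (\<exists>C. circuit E I C \<and> (\<forall>S\<in>P. card (C \<inter> S) \<le> 1))"

definition rank_preserving :: "'a set \<Rightarrow> 'a set set \<Rightarrow> 'a set set \<Rightarrow> bool" where
  "rank_preserving E I P \<longleftrightarrow> card P = mrank I E"

definition is_cut :: "'a set \<Rightarrow> 'a set set \<Rightarrow> 'a set \<Rightarrow> bool" where
  "is_cut E I X \<longleftrightarrow> X \<subseteq> E \<and> (\<forall>B. basis I B \<longrightarrow> X \<inter> B \<noteq> {}) \<and>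
     (\<forall>Y. Y \<subset> X \<longrightarrow> (\<exists>B. basis I B \<and> Y \<inter> B = {}))"

definition standard_coloring :: "'a set \<Rightarrow> 'a set set \<Rightarrow> 'a set set \<Rightarrow> bool" where
  "standard_coloring E I P \<longleftrightarrow>
     (\<exists>S. bij_betw S {1..mrank I E} P \<and>
        (\<forall>i\<in>{1..mrank I E}.
           is_cut (\<Union>(S ` {1..i})) (restr_indep I (\<Union>(S ` {1..i}))) (S i)))"

definition has_nonstandard_rp_rcf_coloring :: "'a set \<Rightarrow> 'a set set \<Rightarrow> bool" where
  "has_nonstandard_rp_rcf_coloring E I \<longleftrightarrow>
     (\<exists>P. coloring E P \<and> rainbow_circuit_free E I P \<and> rank_preserving E I P \<and>
          \<not> standard_coloring E I P)"

end

theory Submission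
  imports Defs "HOL-Library.Infinite_Set"
begin

text \<open>
  Work with the rank function r of M: the restriction M|F has the rank function r on F and the
  contraction M/F has X \<mapsto> r (X \<union> F) - r F on E - F. Glue the given non-standard coloring of
  one side to a rank-preserving rainbow-circuit-free coloring of the other side; every loopless
  matroid has one (colour e by the least i such that e is spanned by b 1, ..., b i, for a basis
  b 1, ..., b n), and M/F is loopless because F is a flat. The union is rank-preserving, and it
  is rainbow-circuit-free since a rainbow circuit either lies in F or, by submodularity, meets
  E - F in a set that is dependent in M/F.

  In a standard ordering S 1, ..., S r of the union every element of S i raises the rank of
  A (i - 1) = S 1 \<union> ... \<union> S (i - 1) to that of A i. Intersecting the prefixes A i with F, or
  joining them with F, gives orderings of the two parts in which the rank changes only at the
  classes of that part: it rises there (by submodularity) for M|F, and by at most one for M/F.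
  As the number of classes of each part equals its total rise in rank, it rises by exactly one at
  each of them, so both induced orderings would be standard.
\<close>

section \<open>Rank functions\<close>

locale rank_function =
  fixes G :: "'a set" and \<rho> :: "'a set \<Rightarrow> nat"
  assumes finite_ground: "finite G"
    and rank_empty: "\<rho> {} = 0"
    and rank_singleton_le: "e \<in> G \<Longrightarrow> \<rho> {e} \<le> 1"
    and rank_mono: "X \<subseteq> Y \<Longrightarrow> Y \<subseteq> G \<Longrightarrow> \<rho> X \<le> \<rho> Y"
    and rank_submod: "X \<subseteq> G \<Longrightarrow> Y \<subseteq> G \<Longrightarrow> \<rho> (X \<union> Y) + \<rho> (X \<inter> Y) \<le> \<rho> X + \<rho> Y"

definition rank_indep :: "'a set \<Rightarrow> ('a set \<Rightarrow> nat) \<Rightarrow> 'a set set" where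
  "rank_indep G \<rho> = {X. X \<subseteq> G \<and> \<rho> X = card X}"

context rank_function
begin

lemma rank_function_subset:
  assumes "A \<subseteq> G"
  shows "rank_function A \<rho>"
proof
  show "finite A" using assms finite_ground by (rule finite_subset)
  show "\<rho> {} = 0" by (rule rank_empty)
  show "\<rho> {e} \<le> 1" if "e \<in> A" for e using that assms by (intro rank_singleton_le) auto
  show "\<rho> X \<le> \<rho> Y" if "X \<subseteq> Y" "Y \<subseteq> A" for X Y using that assms by (intro rank_mono) auto
  show "\<rho> (X \<union> Y) + \<rho> (X \<inter> Y) \<le> \<rho> X + \<rho> Y" if "X \<subseteq> A" "Y \<subseteq> A" for X Y
    using that assms by (intro rank_submod) auto
qed

lemma rank_insert_le:
  assumes "X \<subseteq> G" "e \<in> G"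
  shows "\<rho> (insert e X) \<le> \<rho> X + 1"
proof -
  have "\<rho> (X \<union> {e}) + \<rho> (X \<inter> {e}) \<le> \<rho> X + \<rho> {e}"
    using assms by (intro rank_submod) auto
  then show ?thesis using rank_singleton_le[OF assms(2)] by simp
qed

lemma rank_le_card: "X \<subseteq> G \<Longrightarrow> \<rho> X \<le> card X"
proof (induction X rule: infinite_finite_induct)
  case (insert x X)
  then show ?case using rank_insert_le[of X x] by simp
qed (auto simp: rank_empty finite_subset[OF _ finite_ground])

lemma rank_insert_less_antimono:
  assumes "X \<subseteq> Y" "Y \<subseteq> G" "e \<in> G" "\<rho> Y < \<rho> (insert e Y)"
  shows "\<rho> X < \<rho> (insert e X)"
proof -
  have "insert e X \<union> Y = insert e Y" using assms(1) by auto
  then have "\<rho> (insert e Y) + \<rho> (insert e X \<inter> Y) \<le> \<rho> (insert e X) + \<rho> Y"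
    using rank_submod[of "insert e X" Y] assms by auto
  moreover have "\<rho> X \<le> \<rho> (insert e X \<inter> Y)" using assms by (intro rank_mono) auto
  ultimately show ?thesis using assms(4) by linarith
qed

lemma rank_Un_cong:
  assumes "X \<subseteq> Y" "Y \<subseteq> G" "Z \<subseteq> G" "\<rho> X = \<rho> Y"
  shows "\<rho> (X \<union> Z) = \<rho> (Y \<union> Z)"
proof -
  have "(X \<union> Z) \<union> Y = Y \<union> Z" using assms(1) by auto
  then have "\<rho> (Y \<union> Z) + \<rho> ((X \<union> Z) \<inter> Y) \<le> \<rho> (X \<union> Z) + \<rho> Y"
    using rank_submod[of "X \<union> Z" Y] assms by auto
  moreover have "\<rho> X \<le> \<rho> ((X \<union> Z) \<inter> Y)" using assms by (intro rank_mono) auto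
  moreover have "\<rho> (X \<union> Z) \<le> \<rho> (Y \<union> Z)" using assms by (intro rank_mono) auto
  ultimately show ?thesis using assms(4) by linarith
qed

lemma rank_Un_spanned:
  assumes "X \<subseteq> G" "Z \<subseteq> G" "\<And>c. c \<in> Z \<Longrightarrow> \<rho> (insert c X) = \<rho> X"
  shows "\<rho> (X \<union> Z) = \<rho> X"
  using finite_subset[OF assms(2) finite_ground] assms(2,3)
proof (induction Z rule: finite_induct)
  case (insert c Z)
  have "\<not> \<rho> (X \<union> Z) < \<rho> (insert c (X \<union> Z))"
    using rank_insert_less_antimono[of X "X \<union> Z" c] insert assms(1) by auto
  moreover have "\<rho> (X \<union> Z) \<le> \<rho> (insert c (X \<union> Z))" using insert assms(1) by (intro rank_mono) auto
  ultimately show ?case using insert by auto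
qed simp

lemma rank_indep_subset:
  assumes "X \<in> rank_indep G \<rho>" "Y \<subseteq> X"
  shows "Y \<in> rank_indep G \<rho>"
proof -
  have X: "X \<subseteq> G" "\<rho> X = card X" and "finite X"
    using assms(1) finite_subset[OF _ finite_ground] by (auto simp: rank_indep_def)
  have "Y \<union> (X - Y) = X" "Y \<inter> (X - Y) = {}" using assms(2) by auto
  then have "\<rho> X + \<rho> {} \<le> \<rho> Y + \<rho> (X - Y)"
    using rank_submod[of Y "X - Y"] assms X by auto
  moreover have "card X = card Y + card (X - Y)"
    using \<open>finite X\<close> assms(2) by (metis card_Diff_subset card_mono finite_subset le_add_diff_inverse)
  moreover have "\<rho> (X - Y) \<le> card (X - Y)" "\<rho> Y \<le> card Y"
    using X assms(2) by (auto intro!: rank_le_card)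
  ultimately have "\<rho> Y = card Y" using rank_empty X(2) by linarith
  then show ?thesis using X assms(2) by (auto simp: rank_indep_def)
qed

lemma rank_maximal_indep:
  assumes "B \<subseteq> X" "X \<subseteq> G" "B \<in> rank_indep G \<rho>"
    and maximal: "\<And>c. c \<in> X - B \<Longrightarrow> insert c B \<notin> rank_indep G \<rho>"
  shows "\<rho> X = \<rho> B"
proof -
  have B: "\<rho> B = card B" "finite B"
    using assms finite_subset[OF _ finite_ground] by (auto simp: rank_indep_def)
  have "\<rho> (insert c B) = \<rho> B" if c: "c \<in> X - B" for c
  proof -
    have "\<rho> (insert c B) \<noteq> card (insert c B)" using maximal[OF c] c assms(1,2) by (auto simp: rank_indep_def)
    moreover have "\<rho> (insert c B) \<le> \<rho> B + 1" "\<rho> B \<le> \<rho> (insert c B)"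
      using rank_insert_le[of B c] rank_mono[of B "insert c B"] c assms(1,2) by auto
    ultimately show ?thesis using B c by auto
  qed
  then have "\<rho> (B \<union> (X - B)) = \<rho> B" using assms(1,2) by (intro rank_Un_spanned) auto
  moreover have "B \<union> (X - B) = X" using assms(1) by auto
  ultimately show ?thesis by simp
qed

lemma finite_subsets:
  assumes "X \<subseteq> G"
  shows "finite {Y. Y \<subseteq> X \<and> P Y}"
proof (rule finite_subset)
  show "{Y. Y \<subseteq> X \<and> P Y} \<subseteq> Pow X" by blast
  show "finite (Pow X)" using finite_subset[OF assms finite_ground] by simp
qed

lemma exists_spanning_indep:
  assumes "X \<subseteq> G"
  obtains B where "B \<subseteq> X" "B \<in> rank_indep G \<rho>" "\<rho> B = \<rho> X"
proof -
  let ?C = "{B. B \<subseteq> X \<and> B \<in> rank_indep G \<rho>}"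
  have "?C \<noteq> {}" using rank_empty by (auto simp: rank_indep_def)
  from finite_has_maximal[OF finite_subsets[OF assms] this]
  obtain B where B: "B \<in> ?C" and max: "\<forall>B'\<in>?C. B \<subseteq> B' \<longrightarrow> B = B'"
    by blast
  have "\<rho> X = \<rho> B"
  proof (rule rank_maximal_indep)
    show "insert c B \<notin> rank_indep G \<rho>" if "c \<in> X - B" for c
      using max B that by blast
  qed (use B assms in auto)
  with B show thesis by (intro that) auto
qed

lemma mrank_rank_indep:
  assumes "X \<subseteq> G"
  shows "mrank (rank_indep G \<rho>) X = \<rho> X"
proof -
  let ?K = "card ` {Y. Y \<subseteq> X \<and> Y \<in> rank_indep G \<rho>}"
  have finite: "finite ?K" using finite_subsets[OF assms] by (rule finite_imageI)
  have upper: "y \<le> \<rho> X" if y: "y \<in> ?K" for y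
  proof -
    obtain Y where "Y \<subseteq> X" "Y \<in> rank_indep G \<rho>" "y = card Y" using y by blast
    then show ?thesis using rank_mono[of Y X] assms by (simp add: rank_indep_def)
  qed
  have attained: "\<rho> X \<in> ?K"
  proof -
    obtain B where "B \<subseteq> X" "B \<in> rank_indep G \<rho>" "\<rho> B = \<rho> X"
      using exists_spanning_indep[OF assms] .
    then show ?thesis by (intro image_eqI[of _ _ B]) (auto simp: rank_indep_def)
  qed
  show ?thesis unfolding mrank_def using Max_eqI[OF finite upper attained] .
qed

lemma basis_disjoint_iff: "(\<exists>B. basis (rank_indep G \<rho>) B \<and> Y \<inter> B = {}) \<longleftrightarrow> \<rho> (G - Y) = \<rho> G"
proof
  assume "\<exists>B. basis (rank_indep G \<rho>) B \<and> Y \<inter> B = {}"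
  then obtain B where B: "B \<in> rank_indep G \<rho>" "\<And>X. X \<in> rank_indep G \<rho> \<Longrightarrow> B \<subseteq> X \<Longrightarrow> X = B"
    and "Y \<inter> B = {}" unfolding basis_def by blast
  then have "B \<subseteq> G - Y" by (auto simp: rank_indep_def)
  moreover have "\<rho> G = \<rho> B"
  proof (rule rank_maximal_indep)
    show "insert c B \<notin> rank_indep G \<rho>" if "c \<in> G - B" for c
      using B(2)[of "insert c B"] that by blast
  qed (use B in \<open>auto simp: rank_indep_def\<close>)
  ultimately show "\<rho> (G - Y) = \<rho> G"
    using rank_mono[of B "G - Y"] rank_mono[of "G - Y" G] by auto
next
  assume Y: "\<rho> (G - Y) = \<rho> G"
  obtain B where B: "B \<subseteq> G - Y" "B \<in> rank_indep G \<rho>" "\<rho> B = \<rho> (G - Y)"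
    using exists_spanning_indep[of "G - Y"] by blast
  have "X = B" if "X \<in> rank_indep G \<rho>" "B \<subseteq> X" for X
  proof -
    have "card X \<le> card B" using that B Y rank_mono[of X G] by (auto simp: rank_indep_def)
    moreover have "finite X" using that finite_subset[OF _ finite_ground] by (auto simp: rank_indep_def)
    ultimately have "B = X" using card_seteq that(2) by blast
    then show ?thesis by simp
  qed
  then show "\<exists>B. basis (rank_indep G \<rho>) B \<and> Y \<inter> B = {}"
    using B by (auto simp: basis_def)
qed

end

section \<open>Cuts and standard colorings in terms of rank\<close>

definition rank_cut :: "'a set \<Rightarrow> ('a set \<Rightarrow> nat) \<Rightarrow> 'a set \<Rightarrow> bool" where
  "rank_cut A \<rho> S \<longleftrightarrow> \<rho> (A - S) < \<rho> A \<and> (\<forall>e\<in>S. \<rho> (insert e (A - S)) = \<rho> A)"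

definition rank_standard :: "'a set \<Rightarrow> ('a set \<Rightarrow> nat) \<Rightarrow> 'a set set \<Rightarrow> bool" where
  "rank_standard G \<rho> P \<longleftrightarrow> (\<exists>S. bij_betw S {1..\<rho> G} P \<and>
     (\<forall>i\<in>{1..\<rho> G}. rank_cut (\<Union>(S ` {1..i})) \<rho> (S i)))"

definition contract_rank :: "('a set \<Rightarrow> nat) \<Rightarrow> 'a set \<Rightarrow> 'a set \<Rightarrow> nat" where
  "contract_rank \<rho> F X = \<rho> (X \<union> F) - \<rho> F"

lemma restr_indep_rank_indep: "A \<subseteq> G \<Longrightarrow> restr_indep (rank_indep G \<rho>) A = rank_indep A \<rho>"
  by (auto simp: restr_indep_def rank_indep_def)

context rank_function
begin

lemma is_cut_iff_rank_cut:
  assumes "S \<subseteq> G"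
  shows "is_cut G (rank_indep G \<rho>) S \<longleftrightarrow> rank_cut G \<rho> S"
proof -
  have "is_cut G (rank_indep G \<rho>) S \<longleftrightarrow> \<rho> (G - S) \<noteq> \<rho> G \<and> (\<forall>Y. Y \<subset> S \<longrightarrow> \<rho> (G - Y) = \<rho> G)"
    using assms by (simp add: is_cut_def basis_disjoint_iff[symmetric])
  also have "\<dots> \<longleftrightarrow> rank_cut G \<rho> S"
  proof -
    have "(\<forall>Y. Y \<subset> S \<longrightarrow> \<rho> (G - Y) = \<rho> G) \<longleftrightarrow> (\<forall>e\<in>S. \<rho> (insert e (G - S)) = \<rho> G)"
    proof
      assume cut: "\<forall>Y. Y \<subset> S \<longrightarrow> \<rho> (G - Y) = \<rho> G"
      show "\<forall>e\<in>S. \<rho> (insert e (G - S)) = \<rho> G"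
      proof
        fix e assume "e \<in> S"
        then have "G - (S - {e}) = insert e (G - S)" "S - {e} \<subset> S" using assms by auto
        then show "\<rho> (insert e (G - S)) = \<rho> G" using cut[rule_format, of "S - {e}"] by simp
      qed
    next
      assume spans: "\<forall>e\<in>S. \<rho> (insert e (G - S)) = \<rho> G"
      show "\<forall>Y. Y \<subset> S \<longrightarrow> \<rho> (G - Y) = \<rho> G"
      proof (intro allI impI)
        fix Y assume "Y \<subset> S"
        then obtain e where "e \<in> S" "e \<notin> Y" by blast
        then have "\<rho> (insert e (G - S)) \<le> \<rho> (G - Y)" "\<rho> (G - Y) \<le> \<rho> G"
          using assms \<open>Y \<subset> S\<close> by (auto intro!: rank_mono)
        then show "\<rho> (G - Y) = \<rho> G" using spans \<open>e \<in> S\<close> by fastforce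
      qed
    qed
    moreover have "\<rho> (G - S) \<le> \<rho> G" by (rule rank_mono) auto
    ultimately show ?thesis unfolding rank_cut_def by auto
  qed
  finally show ?thesis .
qed

lemma standard_coloring_iff_rank_standard:
  assumes "\<Union>P \<subseteq> G"
  shows "standard_coloring G (rank_indep G \<rho>) P \<longleftrightarrow> rank_standard G \<rho> P"
proof -
  have "is_cut (\<Union>(S ` {1..i})) (restr_indep (rank_indep G \<rho>) (\<Union>(S ` {1..i}))) (S i)
        \<longleftrightarrow> rank_cut (\<Union>(S ` {1..i})) \<rho> (S i)"
    if "bij_betw S {1..\<rho> G} P" "i \<in> {1..\<rho> G}" for S i
  proof -
    have "S ` {1..i} \<subseteq> P" using that by (auto simp: bij_betw_def)
    then have A: "\<Union>(S ` {1..i}) \<subseteq> G" using assms by blast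
    interpret A: rank_function "\<Union>(S ` {1..i})" \<rho> by (rule rank_function_subset[OF A])
    show ?thesis unfolding restr_indep_rank_indep[OF A]
      by (rule A.is_cut_iff_rank_cut) (use that(2) in auto)
  qed
  then show ?thesis unfolding standard_coloring_def rank_standard_def mrank_rank_indep[OF order_refl]
    by (intro iff_exI conj_cong ball_cong refl) simp
qed

lemma has_nonstandard_coloring_iff:
  "has_nonstandard_rp_rcf_coloring G (rank_indep G \<rho>) \<longleftrightarrow>
    (\<exists>P. partition_on G P \<and> rainbow_circuit_free G (rank_indep G \<rho>) P \<and> card P = \<rho> G \<and>
         \<not> rank_standard G \<rho> P)"
proof -
  have "standard_coloring G (rank_indep G \<rho>) P \<longleftrightarrow> rank_standard G \<rho> P" if "partition_on G P" for P
    using that by (intro standard_coloring_iff_rank_standard) (simp add: partition_on_def)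
  then show ?thesis
    unfolding has_nonstandard_rp_rcf_coloring_def coloring_def rank_preserving_def
      mrank_rank_indep[OF order_refl]
    by blast
qed

lemma rank_function_contract:
  assumes "F \<subseteq> G"
  shows "rank_function (G - F) (contract_rank \<rho> F)"
proof
  have mono_F: "\<rho> F \<le> \<rho> (X \<union> F)" if "X \<subseteq> G" for X using that assms by (intro rank_mono) auto
  show "finite (G - F)" using finite_ground by simp
  show "contract_rank \<rho> F {} = 0" by (simp add: contract_rank_def)
  show "contract_rank \<rho> F {e} \<le> 1" if "e \<in> G - F" for e
    using rank_insert_le[of F e] that assms by (simp add: contract_rank_def)
  show "contract_rank \<rho> F X \<le> contract_rank \<rho> F Y" if "X \<subseteq> Y" "Y \<subseteq> G - F" for X Y
  proof -
    have "\<rho> (X \<union> F) \<le> \<rho> (Y \<union> F)" using that assms by (intro rank_mono) auto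
    then show ?thesis by (simp add: contract_rank_def)
  qed
  show "contract_rank \<rho> F (X \<union> Y) + contract_rank \<rho> F (X \<inter> Y) \<le> contract_rank \<rho> F X + contract_rank \<rho> F Y"
    if "X \<subseteq> G - F" "Y \<subseteq> G - F" for X Y
  proof -
    have "(X \<union> F) \<union> (Y \<union> F) = X \<union> Y \<union> F" "(X \<union> F) \<inter> (Y \<union> F) = X \<inter> Y \<union> F" by auto
    then have "\<rho> (X \<union> Y \<union> F) + \<rho> (X \<inter> Y \<union> F) \<le> \<rho> (X \<union> F) + \<rho> (Y \<union> F)"
      using rank_submod[of "X \<union> F" "Y \<union> F"] that assms by auto
    moreover have "\<rho> F \<le> \<rho> (X \<union> F)" "\<rho> F \<le> \<rho> (Y \<union> F)" "\<rho> F \<le> \<rho> (X \<inter> Y \<union> F)"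
      "\<rho> F \<le> \<rho> (X \<union> Y \<union> F)"
      using that by (auto intro!: mono_F)
    ultimately show ?thesis unfolding contract_rank_def by linarith
  qed
qed

lemma contr_indep_rank_indep:
  assumes "F \<subseteq> G"
  shows "contr_indep G (rank_indep G \<rho>) F = rank_indep (G - F) (contract_rank \<rho> F)"
proof (rule set_eqI)
  fix X
  show "X \<in> contr_indep G (rank_indep G \<rho>) F \<longleftrightarrow> X \<in> rank_indep (G - F) (contract_rank \<rho> F)"
  proof (cases "X \<subseteq> G - F")
    case True
    then have "mrank (rank_indep G \<rho>) (X \<union> F) = \<rho> (X \<union> F)" "\<rho> F \<le> \<rho> (X \<union> F)"
      using assms by (auto intro!: mrank_rank_indep rank_mono)
    moreover have "mrank (rank_indep G \<rho>) F = \<rho> F" using assms by (rule mrank_rank_indep)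
    ultimately show ?thesis using True
      unfolding contr_indep_def rank_indep_def contract_rank_def by auto
  next
    case False
    then show ?thesis by (simp add: contr_indep_def rank_indep_def)
  qed
qed

end

section \<open>Matroids\<close>

context
  fixes E :: "'a set" and I :: "'a set set"
  assumes matroid: "matroid E I"
begin

lemma matroid_finite_ground: "finite E"
  using matroid by (simp add: matroid_def)

lemma matroid_indep_subset_ground: "X \<in> I \<Longrightarrow> X \<subseteq> E"
  using matroid by (simp add: matroid_def)

lemma matroid_indep_subset: "X \<in> I \<Longrightarrow> Y \<subseteq> X \<Longrightarrow> Y \<in> I"
  using matroid unfolding matroid_def by blast

lemma matroid_indep_augment: "X \<in> I \<Longrightarrow> Y \<in> I \<Longrightarrow> card X < card Y \<Longrightarrow> \<exists>e\<in>Y - X. insert e X \<in> I"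
  using matroid unfolding matroid_def by blast

lemma finite_indep_subsets:
  assumes "X \<subseteq> E"
  shows "finite {Y. Y \<subseteq> X \<and> Y \<in> I}"
proof -
  have "finite (Pow X)" using finite_subset[OF assms matroid_finite_ground] by simp
  then show ?thesis by (rule rev_finite_subset) blast
qed

lemma card_le_mrank:
  assumes "X \<subseteq> E" "Y \<subseteq> X" "Y \<in> I"
  shows "card Y \<le> mrank I X"
  unfolding mrank_def using finite_imageI[OF finite_indep_subsets[OF assms(1)]] assms(2,3)
  by (intro Max_ge) auto

lemma mrank_attained:
  assumes "X \<subseteq> E"
  obtains Y where "Y \<subseteq> X" "Y \<in> I" "card Y = mrank I X"
proof -
  have "{} \<in> I" using matroid by (simp add: matroid_def)
  then have "mrank I X \<in> card ` {Y. Y \<subseteq> X \<and> Y \<in> I}"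
    unfolding mrank_def using finite_imageI[OF finite_indep_subsets[OF assms]] by (intro Max_in) auto
  then show ?thesis using that by auto
qed

lemma mrank_le_card:
  assumes "X \<subseteq> E"
  shows "mrank I X \<le> card X"
proof -
  obtain Y where "Y \<subseteq> X" "card Y = mrank I X" using mrank_attained[OF assms] .
  moreover have "finite X" using assms matroid_finite_ground by (rule finite_subset)
  ultimately show ?thesis using card_mono by metis
qed

lemma indep_extend_to_mrank:
  assumes "J \<in> I" "J \<subseteq> X" "X \<subseteq> E"
  obtains J' where "J \<subseteq> J'" "J' \<subseteq> X" "J' \<in> I" "card J' = mrank I X"
proof -
  let ?C = "{Y. J \<subseteq> Y \<and> Y \<subseteq> X \<and> Y \<in> I}"
  have "finite ?C" using finite_indep_subsets[OF assms(3)] by (rule rev_finite_subset) blast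
  moreover have "?C \<noteq> {}" using assms by blast
  ultimately obtain B where B: "J \<subseteq> B" "B \<subseteq> X" "B \<in> I"
    and max: "\<forall>Y\<in>?C. B \<subseteq> Y \<longrightarrow> B = Y"
    using finite_has_maximal[of ?C] by blast
  obtain Y where Y: "Y \<subseteq> X" "Y \<in> I" "card Y = mrank I X" using mrank_attained[OF assms(3)] .
  have "\<not> card B < card Y"
  proof
    assume "card B < card Y"
    then obtain e where "e \<in> Y - B" "insert e B \<in> I" using matroid_indep_augment B(3) Y(2) by blast
    then show False using max B Y(1) by blast
  qed
  moreover have "card B \<le> mrank I X" using B assms(3) by (intro card_le_mrank)
  ultimately have "card B = mrank I X" using Y(3) by simp
  with B show thesis by (intro that)
qed

lemma matroid_rank_function: "rank_function E (mrank I)"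
proof
  show "finite E" by (rule matroid_finite_ground)
  show "mrank I {} = 0" using mrank_le_card[of "{}"] by simp
  show "mrank I {e} \<le> 1" if "e \<in> E" for e using mrank_le_card[of "{e}"] that by simp
  show "mrank I X \<le> mrank I Y" if XY: "X \<subseteq> Y" "Y \<subseteq> E" for X Y
  proof -
    obtain Z where "Z \<subseteq> X" "Z \<in> I" "card Z = mrank I X" using mrank_attained[of X] XY by blast
    then show ?thesis using card_le_mrank[of Y Z] XY by simp
  qed
  show "mrank I (X \<union> Y) + mrank I (X \<inter> Y) \<le> mrank I X + mrank I Y"
    if XY: "X \<subseteq> E" "Y \<subseteq> E" for X Y
  proof -
    obtain B0 where B0: "B0 \<subseteq> X \<inter> Y" "B0 \<in> I" "card B0 = mrank I (X \<inter> Y)"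
      using mrank_attained[of "X \<inter> Y"] XY by blast
    obtain B where B: "B0 \<subseteq> B" "B \<subseteq> X \<union> Y" "B \<in> I" "card B = mrank I (X \<union> Y)"
      using indep_extend_to_mrank[OF B0(2), of "X \<union> Y"] B0(1) XY by blast
    have "B \<subseteq> E" using B(2) XY by blast
    then have "finite B" using matroid_finite_ground by (rule finite_subset)
    have "B \<inter> X \<in> I" "B \<inter> Y \<in> I" using B(3) matroid_indep_subset by auto
    then have "card (B \<inter> X) \<le> mrank I X" "card (B \<inter> Y) \<le> mrank I Y"
      using XY by (auto intro!: card_le_mrank)
    moreover have "(B \<inter> X) \<union> (B \<inter> Y) = B" "(B \<inter> X) \<inter> (B \<inter> Y) = B \<inter> X \<inter> Y" using B(2) by auto
    then have "card (B \<inter> X) + card (B \<inter> Y) = card B + card (B \<inter> X \<inter> Y)"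
      using card_Un_Int[of "B \<inter> X" "B \<inter> Y"] \<open>finite B\<close> by simp
    moreover have "card B0 \<le> card (B \<inter> X \<inter> Y)"
      using B0(1) B(1) \<open>finite B\<close> by (intro card_mono) auto
    ultimately show ?thesis using B0(3) B(4) by linarith
  qed
qed

lemma matroid_eq_rank_indep: "I = rank_indep E (mrank I)"
proof (intro set_eqI iffI)
  fix X assume "X \<in> I"
  moreover from this have "X \<subseteq> E" by (rule matroid_indep_subset_ground)
  ultimately show "X \<in> rank_indep E (mrank I)"
    using card_le_mrank[of X X] mrank_le_card[of X] by (auto simp: rank_indep_def)
next
  fix X assume "X \<in> rank_indep E (mrank I)"
  then have X: "X \<subseteq> E" "mrank I X = card X" by (auto simp: rank_indep_def)
  obtain Y where "Y \<subseteq> X" "Y \<in> I" "card Y = mrank I X" using mrank_attained[OF X(1)] .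
  moreover have "finite X" using X(1) matroid_finite_ground by (rule finite_subset)
  ultimately have "Y = X" using X(2) card_subset_eq by metis
  with \<open>Y \<in> I\<close> show "X \<in> I" by simp
qed

end

section \<open>A rank-preserving rainbow-circuit-free coloring\<close>

lemma (in rank_function) circuit_rank_delete:
  assumes "circuit G (rank_indep G \<rho>) C" "x \<in> C"
  shows "\<rho> (C - {x}) = \<rho> C"
proof -
  have C: "C \<subseteq> G" "\<rho> C \<noteq> card C" "\<rho> (C - {x}) = card (C - {x})"
    using assms by (auto simp: circuit_def rank_indep_def)
  have "finite C" using C(1) finite_ground by (rule finite_subset)
  then have "card (C - {x}) = card C - 1" "card C > 0" using assms(2) by (auto simp: card_gt_0_iff)
  moreover have "\<rho> C \<le> card C" "\<rho> (C - {x}) \<le> \<rho> C" using C(1) by (auto intro!: rank_le_card rank_mono)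
  ultimately show ?thesis using C(2,3) by linarith
qed

lemma (in rank_function) circuit_element_spanned:
  assumes "circuit G (rank_indep G \<rho>) C" "e \<in> C" "X \<subseteq> G"
    and spanned: "\<And>c. c \<in> C - {e} \<Longrightarrow> \<rho> (insert c X) = \<rho> X"
  shows "\<rho> (insert e X) = \<rho> X"
proof -
  have C: "C \<subseteq> G" using assms(1) by (simp add: circuit_def)
  have "\<rho> (X \<union> (C - {e})) = \<rho> X" using assms(3) C spanned by (intro rank_Un_spanned) auto
  moreover have "\<rho> ((C - {e}) \<union> X) = \<rho> (C \<union> X)"
    using circuit_rank_delete[OF assms(1,2)] C assms(3) by (intro rank_Un_cong) auto
  moreover have "\<rho> X \<le> \<rho> (insert e X)" "\<rho> (insert e X) \<le> \<rho> (C \<union> X)"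
    using assms(2,3) C by (auto intro!: rank_mono)
  ultimately show ?thesis by (simp add: Un_commute)
qed

locale enumerated_basis = rank_function +
  fixes b :: "nat \<Rightarrow> 'a" and n :: nat
  assumes enum_inj: "inj_on b {1..n}"
    and enum_indep: "b ` {1..n} \<in> rank_indep G \<rho>"
    and enum_spans: "\<rho> (b ` {1..n}) = \<rho> G"
begin

definition prefix :: "nat \<Rightarrow> 'a set" where
  "prefix i = b ` {1..i}"

definition level :: "'a \<Rightarrow> nat" where
  "level e = (LEAST i. \<rho> (insert e (prefix i)) = \<rho> (prefix i))"

definition level_class :: "nat \<Rightarrow> 'a set" where
  "level_class i = {e \<in> G. level e = i}"

lemma prefix_indep: "i \<le> n \<Longrightarrow> prefix i \<in> rank_indep G \<rho>"
  unfolding prefix_def by (rule rank_indep_subset[OF enum_indep]) auto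

lemma prefix_subset: "i \<le> n \<Longrightarrow> prefix i \<subseteq> G"
  using prefix_indep by (auto simp: rank_indep_def)

lemma spanned_by_basis:
  assumes "e \<in> G"
  shows "\<rho> (insert e (prefix n)) = \<rho> (prefix n)"
proof -
  have "\<rho> (prefix n) \<le> \<rho> (insert e (prefix n))" "\<rho> (insert e (prefix n)) \<le> \<rho> G"
    using assms prefix_subset[of n] by (auto intro!: rank_mono)
  then show ?thesis using enum_spans by (simp add: prefix_def)
qed

lemma level_le: "e \<in> G \<Longrightarrow> level e \<le> n"
  unfolding level_def by (rule Least_le) (rule spanned_by_basis)

lemma spanned_at_level: "e \<in> G \<Longrightarrow> \<rho> (insert e (prefix (level e))) = \<rho> (prefix (level e))"
  unfolding level_def by (rule LeastI) (rule spanned_by_basis)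

lemma spanned_from_level:
  assumes "e \<in> G" "level e \<le> j" "j \<le> n"
  shows "\<rho> (insert e (prefix j)) = \<rho> (prefix j)"
proof -
  have "prefix (level e) \<subseteq> prefix j" using assms(2) by (auto simp: prefix_def)
  then have "\<not> \<rho> (prefix j) < \<rho> (insert e (prefix j))"
    using rank_insert_less_antimono[of "prefix (level e)" "prefix j" e] spanned_at_level[OF assms(1)]
      prefix_subset[OF assms(3)] assms(1) by auto
  moreover have "\<rho> (prefix j) \<le> \<rho> (insert e (prefix j))"
    using prefix_subset[OF assms(3)] assms(1) by (intro rank_mono) auto
  ultimately show ?thesis by simp
qed

lemma level_pos:
  assumes "e \<in> G" "\<rho> {e} \<noteq> 0"
  shows "level e > 0"
proof (rule ccontr)
  assume "\<not> level e > 0"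
  then show False using spanned_at_level[OF assms(1)] assms(2) rank_empty by (simp add: prefix_def)
qed

lemma level_enum:
  assumes "i \<in> {1..n}"
  shows "level (b i) = i"
  unfolding level_def
proof (rule Least_equality)
  show "\<rho> (insert (b i) (prefix i)) = \<rho> (prefix i)"
    using assms by (simp add: prefix_def insert_absorb)
  show "i \<le> j" if "\<rho> (insert (b i) (prefix j)) = \<rho> (prefix j)" for j
  proof (rule ccontr)
    assume "\<not> i \<le> j"
    have "b i \<notin> prefix j"
    proof
      assume "b i \<in> prefix j"
      then obtain k where "k \<in> {1..j}" "b i = b k" by (auto simp: prefix_def)
      then show False using inj_onD[OF enum_inj, of i k] assms \<open>\<not> i \<le> j\<close> by auto
    qed
    moreover have "insert (b i) (prefix j) \<subseteq> b ` {1..n}"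
      using assms \<open>\<not> i \<le> j\<close> by (auto simp: prefix_def)
    moreover have "finite (prefix j)" by (simp add: prefix_def)
    ultimately have "\<rho> (insert (b i) (prefix j)) = \<rho> (prefix j) + 1"
      using rank_indep_subset[OF enum_indep] \<open>\<not> i \<le> j\<close> prefix_indep[of j] assms
      by (simp add: rank_indep_def)
    then show False using that by simp
  qed
qed

lemma level_classes_partition:
  assumes loopless: "\<And>e. e \<in> G \<Longrightarrow> \<rho> {e} \<noteq> 0"
  shows "partition_on G (level_class ` {1..n})"
proof (rule partition_onI)
  show "\<Union>(level_class ` {1..n}) = G"
    using level_le level_pos[OF _ loopless] by (force simp: level_class_def)
  show "{} \<notin> level_class ` {1..n}"
    using level_enum enum_indep by (force simp: level_class_def rank_indep_def)
qed (auto simp: level_class_def disjnt_def)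

lemma card_level_classes: "card (level_class ` {1..n}) = n"
proof -
  have "inj_on level_class {1..n}"
  proof (rule inj_onI)
    fix i j assume "i \<in> {1..n}" "j \<in> {1..n}" "level_class i = level_class j"
    then have "b i \<in> level_class j"
      using level_enum enum_indep by (force simp: level_class_def rank_indep_def)
    then show "i = j" using level_enum \<open>i \<in> {1..n}\<close> by (simp add: level_class_def)
  qed
  then show ?thesis by (simp add: card_image)
qed

lemma level_classes_rainbow_circuit_free:
  assumes loopless: "\<And>e. e \<in> G \<Longrightarrow> \<rho> {e} \<noteq> 0"
  shows "rainbow_circuit_free G (rank_indep G \<rho>) (level_class ` {1..n})"
  unfolding rainbow_circuit_free_def
proof
  assume "\<exists>C. circuit G (rank_indep G \<rho>) C \<and> (\<forall>S\<in>level_class ` {1..n}. card (C \<inter> S) \<le> 1)"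
  then obtain C where circ: "circuit G (rank_indep G \<rho>) C"
    and rainbow: "\<And>i. i \<in> {1..n} \<Longrightarrow> card (C \<inter> level_class i) \<le> 1" by blast
  have C: "C \<subseteq> G" "C \<noteq> {}" "finite C"
    using circ rank_empty finite_subset[OF _ finite_ground] by (auto simp: circuit_def rank_indep_def)
  define i where "i = Max (level ` C)"
  have "i \<in> level ` C" unfolding i_def using C by (intro Max_in) auto
  then obtain e where e: "e \<in> C" "level e = i" by auto
  have i: "0 < i" "i \<le> n" using e C(1) level_le level_pos[OF _ loopless] by auto
  have prefix_G: "prefix (i - 1) \<subseteq> G" using prefix_subset i by simp
  have below: "level c \<le> i - 1" if c: "c \<in> C - {e}" for c
  proof -
    have "level c \<le> i" unfolding i_def using C(3) c by (intro Max_ge) auto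
    moreover have "level c \<noteq> i"
    proof
      assume "level c = i"
      then have "{c, e} \<subseteq> C \<inter> level_class i" using c e C(1) by (auto simp: level_class_def)
      then have "card {c, e} \<le> 1"
        using rainbow[of i] i card_mono[of "C \<inter> level_class i" "{c, e}"] C(3) by fastforce
      then show False using c by auto
    qed
    ultimately show ?thesis by simp
  qed
  have "\<rho> (insert e (prefix (i - 1))) = \<rho> (prefix (i - 1))"
    using circ e(1) prefix_G
  proof (rule circuit_element_spanned)
    show "\<rho> (insert c (prefix (i - 1))) = \<rho> (prefix (i - 1))" if "c \<in> C - {e}" for c
      using below[OF that] that C(1) i by (intro spanned_from_level) auto
  qed
  then have "level e \<le> i - 1" unfolding level_def by (rule Least_le)
  then show False using e(2) i by simp
qed

end

lemma (in rank_function) exists_rank_preserving_rainbow_circuit_free: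
  assumes loopless: "\<And>e. e \<in> G \<Longrightarrow> \<rho> {e} \<noteq> 0"
  obtains Q where "partition_on G Q" "card Q = \<rho> G" "rainbow_circuit_free G (rank_indep G \<rho>) Q"
proof -
  obtain B where B: "B \<subseteq> G" "B \<in> rank_indep G \<rho>" "\<rho> B = \<rho> G"
    using exists_spanning_indep[of G] by blast
  have "finite B" using B(1) finite_ground by (rule finite_subset)
  then obtain b where b: "bij_betw b {1..card B} B" using ex_bij_betw_nat_finite_1 by blast
  interpret enumerated_basis G \<rho> b "card B"
    using b B by unfold_locales (auto simp: bij_betw_def)
  have "card B = \<rho> G" using B by (simp add: rank_indep_def)
  then show ?thesis
    using that level_classes_partition[OF loopless] card_level_classes
      level_classes_rainbow_circuit_free[OF loopless] by metis
qed

section \<open>Standard orderings of restriction and contraction\<close>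

lemma increments_eq_of_lower_bounds:
  fixes g c :: "nat \<Rightarrow> nat"
  assumes lower: "\<And>i. i < n \<Longrightarrow> g i + c i \<le> g (Suc i)"
    and total: "g n \<le> g 0 + (\<Sum>i<n. c i)" and "i < n"
  shows "g (Suc i) = g i + c i"
proof -
  let ?d = "\<lambda>i. int (g (Suc i)) - int (g i)"
  have le: "int (c i) \<le> ?d i" if "i \<in> {..<n}" for i using lower[of i] that by simp
  have "(\<Sum>i<n. int (c i)) \<le> sum ?d {..<n}" using le by (rule sum_mono)
  moreover have "sum ?d {..<n} = int (g n) - int (g 0)" by (rule sum_lessThan_telescope)
  moreover have "(\<Sum>i<n. int (c i)) = int (\<Sum>i<n. c i)" by simp
  ultimately have "(\<Sum>i<n. int (c i)) = sum ?d {..<n}" using total by linarith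
  from sum_mono_inv[OF this le, of i] \<open>i < n\<close> show ?thesis by simp
qed

lemma increments_eq_of_upper_bounds:
  fixes g c :: "nat \<Rightarrow> nat"
  assumes upper: "\<And>i. i < n \<Longrightarrow> g (Suc i) \<le> g i + c i"
    and total: "g 0 + (\<Sum>i<n. c i) \<le> g n" and "i < n"
  shows "g (Suc i) = g i + c i"
proof -
  let ?d = "\<lambda>i. int (g (Suc i)) - int (g i)"
  have le: "?d i \<le> int (c i)" if "i \<in> {..<n}" for i using upper[of i] that by simp
  have "sum ?d {..<n} \<le> (\<Sum>i<n. int (c i))" using le by (rule sum_mono)
  moreover have "sum ?d {..<n} = int (g n) - int (g 0)" by (rule sum_lessThan_telescope)
  moreover have "(\<Sum>i<n. int (c i)) = int (\<Sum>i<n. c i)" by simp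
  ultimately have "sum ?d {..<n} = (\<Sum>i<n. int (c i))" using total by linarith
  from sum_mono_inv[OF this le, of i] \<open>i < n\<close> show ?thesis by simp
qed

lemma rank_standard_if_ordered:
  fixes J :: "nat set" and S :: "nat \<Rightarrow> 'a set"
  assumes "finite J" "card J = \<rho> G" "bij_betw S J P"
    and cuts: "\<And>i. i \<in> J \<Longrightarrow> rank_cut (\<Union>(S ` {j \<in> J. j \<le> i})) \<rho> (S i)"
  shows "rank_standard G \<rho> P"
proof -
  define \<sigma> where "\<sigma> k = enumerate J (k - 1)" for k
  have \<sigma>_mono_iff: "\<sigma> k \<le> \<sigma> l \<longleftrightarrow> k \<le> l" if "k \<in> {1..card J}" "l \<in> {1..card J}" for k l
    using that assms(1) by (auto simp: \<sigma>_def not_less[symmetric])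
  have "bij_betw (\<lambda>k. k - 1) {1..card J} {..<card J}"
    by (rule bij_betwI[where g = Suc]) auto
  then have \<sigma>: "bij_betw \<sigma> {1..card J} J"
    unfolding \<sigma>_def using finite_bij_enumerate[OF assms(1)] by (rule bij_betw_trans[unfolded comp_def])
  have prefix: "\<sigma> ` {1..k} = {j \<in> J. j \<le> \<sigma> k}" if "k \<in> {1..card J}" for k
  proof
    show "\<sigma> ` {1..k} \<subseteq> {j \<in> J. j \<le> \<sigma> k}"
      using that \<sigma>_mono_iff bij_betw_apply[OF \<sigma>] by auto
    show "{j \<in> J. j \<le> \<sigma> k} \<subseteq> \<sigma> ` {1..k}"
    proof
      fix j assume j: "j \<in> {j \<in> J. j \<le> \<sigma> k}"
      then have "j \<in> \<sigma> ` {1..card J}" using \<sigma> by (simp add: bij_betw_def)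
      then obtain l where "l \<in> {1..card J}" "j = \<sigma> l" by blast
      then show "j \<in> \<sigma> ` {1..k}" using j that \<sigma>_mono_iff by auto
    qed
  qed
  have "bij_betw (S \<circ> \<sigma>) {1..\<rho> G} P" using bij_betw_trans[OF \<sigma> assms(3)] assms(2) by simp
  moreover have "rank_cut (\<Union>((S \<circ> \<sigma>) ` {1..k})) \<rho> ((S \<circ> \<sigma>) k)" if "k \<in> {1..\<rho> G}" for k
  proof -
    have k: "k \<in> {1..card J}" using that assms(2) by simp
    have "(S \<circ> \<sigma>) ` {1..k} = S ` (\<sigma> ` {1..k})" by (rule image_comp[symmetric])
    also have "\<dots> = S ` {j \<in> J. j \<le> \<sigma> k}" using prefix[OF k] by simp
    finally show ?thesis using cuts[OF bij_betw_apply[OF \<sigma> k]] by simp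
  qed
  ultimately show ?thesis unfolding rank_standard_def by blast
qed

locale standard_order = rank_function E r for E :: "'a set" and r +
  fixes P :: "'a set set" and S :: "nat \<Rightarrow> 'a set" and n :: nat
  assumes partition: "partition_on E P"
    and enum: "bij_betw S {1..n} P"
    and cuts: "\<And>i. i \<in> {1..n} \<Longrightarrow> rank_cut (\<Union>(S ` {1..i})) r (S i)"
begin

definition prefix :: "nat \<Rightarrow> 'a set" where
  "prefix m = \<Union>(S ` {1..m})"

lemma class_in: "i \<in> {1..n} \<Longrightarrow> S i \<in> P"
  using enum by (rule bij_betw_apply)

lemma class_nonempty: "i \<in> {1..n} \<Longrightarrow> S i \<noteq> {}"
  using class_in partition_onD3[OF partition] by metis

lemma classes_disjoint:
  assumes "i \<in> {1..n}" "j \<in> {1..n}" "i \<noteq> j"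
  shows "S i \<inter> S j = {}"
proof -
  have "S i \<noteq> S j" using inj_onD[OF bij_betw_imp_inj_on[OF enum]] assms by blast
  then show ?thesis using class_in assms(1,2) partition_onD2[OF partition] by (auto simp: disjoint_def)
qed

lemma class_subset: "i \<in> {1..n} \<Longrightarrow> S i \<subseteq> E"
  using class_in partition by (auto simp: partition_on_def)

lemma prefix_0: "prefix 0 = {}"
  by (simp add: prefix_def)

lemma prefix_Suc: "prefix (Suc i) = prefix i \<union> S (Suc i)"
  by (auto simp: prefix_def atLeastAtMostSuc_conv)

lemma prefix_n: "prefix n = E"
  using enum partition by (simp add: prefix_def bij_betw_def partition_on_def)

lemma prefix_mono: "i \<le> j \<Longrightarrow> prefix i \<subseteq> prefix j"
  unfolding prefix_def by (intro Union_mono image_mono) auto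

lemma prefix_subset: "i \<le> n \<Longrightarrow> prefix i \<subseteq> E"
  using prefix_mono prefix_n by blast

lemma prefix_disjoint:
  assumes "i < n"
  shows "prefix i \<inter> S (Suc i) = {}"
proof -
  have "S k \<inter> S (Suc i) = {}" if "k \<in> {1..i}" for k
    using classes_disjoint[of k "Suc i"] that assms by auto
  then show ?thesis unfolding prefix_def by blast
qed

lemma prefix_Suc_diff: "i < n \<Longrightarrow> prefix (Suc i) - S (Suc i) = prefix i"
  using prefix_Suc[of i] prefix_disjoint[of i] by blast

lemma rank_step:
  assumes "i < n" "e \<in> S (Suc i)"
  shows "r (prefix i) < r (insert e (prefix i))" "r (insert e (prefix i)) = r (prefix (Suc i))"
proof -
  have "rank_cut (prefix (Suc i)) r (S (Suc i))" using cuts[of "Suc i"] assms(1) by (simp add: prefix_def)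
  then show "r (insert e (prefix i)) = r (prefix (Suc i))" "r (prefix i) < r (insert e (prefix i))"
    using assms unfolding rank_cut_def prefix_Suc_diff[OF assms(1)] by auto
qed

definition subfamily_indices :: "'a set set \<Rightarrow> nat set" where
  "subfamily_indices P' = {i \<in> {1..n}. S i \<in> P'}"

context
  fixes P' :: "'a set set"
  assumes subfamily: "P' \<subseteq> P"
begin

lemma subfamily_indices_enum: "bij_betw S (subfamily_indices P') P'"
  using enum subfamily unfolding subfamily_indices_def bij_betw_def by (auto intro: inj_on_subset)

lemma card_subfamily_indices: "card (subfamily_indices P') = card P'"
  using subfamily_indices_enum by (rule bij_betw_same_card)

lemma sum_subfamily_indicator: "(\<Sum>i<n. of_bool (Suc i \<in> subfamily_indices P')) = card P'"
proof -
  have "(\<Sum>i<n. of_bool (Suc i \<in> subfamily_indices P')) = (\<Sum>i\<in>{Suc 0..n}. of_bool (i \<in> subfamily_indices P') :: nat)"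
    by (simp add: sum.atLeast1_atMost_eq)
  also have "\<dots> = card (subfamily_indices P')"
    by (simp add: subfamily_indices_def Int_def conj_commute)
  finally show ?thesis by (simp add: card_subfamily_indices)
qed

lemma class_subset_subfamily: "i \<in> subfamily_indices P' \<Longrightarrow> S i \<subseteq> \<Union>P'"
  by (auto simp: subfamily_indices_def)

lemma class_disjoint_subfamily: "i \<in> {1..n} \<Longrightarrow> i \<notin> subfamily_indices P' \<Longrightarrow> S i \<inter> \<Union>P' = {}"
proof -
  assume i: "i \<in> {1..n}" "i \<notin> subfamily_indices P'"
  have "S i \<inter> p = {}" if "p \<in> P'" for p
  proof -
    have "p \<in> S ` {1..n}" using that subfamily enum by (auto simp: bij_betw_def)
    then obtain j where "j \<in> {1..n}" "p = S j" by blast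
    then show ?thesis using i that classes_disjoint[of i j] by (auto simp: subfamily_indices_def)
  qed
  then show ?thesis by blast
qed

lemma prefix_Int_subfamily: "m \<le> n \<Longrightarrow> \<Union>(S ` {j \<in> subfamily_indices P'. j \<le> m}) = prefix m \<inter> \<Union>P'"
  using class_subset_subfamily class_disjoint_subfamily by (fastforce simp: prefix_def subfamily_indices_def)

end

lemma rank_standard_subfamily:
  assumes sub: "P' \<subseteq> P" and card: "card P' = \<rho>' G'"
    and cuts: "\<And>i. i < n \<Longrightarrow> Suc i \<in> subfamily_indices P' \<Longrightarrow>
      rank_cut (prefix (Suc i) \<inter> \<Union>P') \<rho>' (S (Suc i))"
  shows "rank_standard G' \<rho>' P'"
proof (rule rank_standard_if_ordered)
  show "finite (subfamily_indices P')" by (simp add: subfamily_indices_def)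
  show "card (subfamily_indices P') = \<rho>' G'" using card_subfamily_indices[OF sub] card by simp
  show "bij_betw S (subfamily_indices P') P'" by (rule subfamily_indices_enum[OF sub])
  show "rank_cut (\<Union>(S ` {j \<in> subfamily_indices P'. j \<le> i})) \<rho>' (S i)"
    if i: "i \<in> subfamily_indices P'" for i
  proof -
    obtain k where "i = Suc k" "k < n" using i by (cases i) (auto simp: subfamily_indices_def)
    then show ?thesis using cuts[of k] prefix_Int_subfamily[OF sub, of i] i by simp
  qed
qed

lemma rank_insert_less_below_prefix:
  assumes "i < n" "e \<in> S (Suc i)" "X \<subseteq> prefix i"
  shows "r X < r (insert e X)"
  using rank_insert_less_antimono[OF assms(3) prefix_subset _ rank_step(1)[OF assms(1,2)]]
    class_subset[of "Suc i"] assms by auto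

lemma rank_restriction_jump:
  assumes sub: "P' \<subseteq> P" and F: "\<Union>P' = F" and card: "card P' = r F"
    and "i < n" "Suc i \<in> subfamily_indices P'"
  shows "r (prefix (Suc i) \<inter> F) = r (prefix i \<inter> F) + 1"
proof -
  let ?J = "subfamily_indices P'"
  define g where "g i = r (prefix i \<inter> F)" for i
  have FE: "F \<subseteq> E" using sub F partition by (auto simp: partition_on_def)
  have lower: "g i + of_bool (Suc i \<in> ?J) \<le> g (Suc i)" if i: "i < n" for i
  proof -
    have "g i \<le> g (Suc i)" unfolding g_def using FE prefix_mono[of i "Suc i"] by (intro rank_mono) auto
    moreover have "g i < g (Suc i)" if J: "Suc i \<in> ?J"
    proof -
      obtain e where e: "e \<in> S (Suc i)" using class_nonempty[of "Suc i"] i by auto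
      then have "e \<in> F" using class_subset_subfamily[OF sub J] F by auto
      then have "r (insert e (prefix i \<inter> F)) \<le> g (Suc i)"
        unfolding g_def using FE e prefix_Suc[of i] by (intro rank_mono) auto
      moreover have "g i < r (insert e (prefix i \<inter> F))"
        unfolding g_def by (rule rank_insert_less_below_prefix[OF i e]) blast
      ultimately show ?thesis by linarith
    qed
    ultimately show ?thesis by (cases "Suc i \<in> ?J") simp_all
  qed
  have "g n = r F" "g 0 = 0" using FE rank_empty by (auto simp: g_def prefix_n prefix_0 Int_absorb1)
  then have "g n \<le> g 0 + (\<Sum>i<n. of_bool (Suc i \<in> ?J))"
    using sum_subfamily_indicator[OF sub] card by simp
  from increments_eq_of_lower_bounds[of n g "\<lambda>i. of_bool (Suc i \<in> ?J)", OF lower this assms(4)]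
  show ?thesis using assms(5) by (simp add: g_def)
qed

lemma rank_standard_restriction:
  assumes sub: "P' \<subseteq> P" and F: "\<Union>P' = F" and card: "card P' = r F"
  shows "rank_standard F r P'"
proof (rule rank_standard_subfamily[where \<rho>' = r and G' = F, OF sub card])
  fix i assume i: "i < n" "Suc i \<in> subfamily_indices P'"
  have "prefix (Suc i) \<inter> F - S (Suc i) = prefix i \<inter> F" using prefix_Suc_diff[OF i(1)] by blast
  moreover have "r (insert e (prefix i \<inter> F)) = r (prefix (Suc i) \<inter> F)" if e: "e \<in> S (Suc i)" for e
  proof -
    have "e \<in> F" using class_subset_subfamily[OF sub i(2)] e F by auto
    then have "r (insert e (prefix i \<inter> F)) \<le> r (prefix (Suc i) \<inter> F)"
      using e prefix_Suc[of i] prefix_subset[of "Suc i"] i(1) by (intro rank_mono) auto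
    then show ?thesis
      using rank_insert_less_below_prefix[OF i(1) e, of "prefix i \<inter> F"]
        rank_restriction_jump[OF sub F card i] by simp
  qed
  ultimately show "rank_cut (prefix (Suc i) \<inter> \<Union>P') r (S (Suc i))"
    unfolding rank_cut_def F using rank_restriction_jump[OF sub F card i] by simp
qed

lemma rank_insert_prefix_Un:
  assumes "i < n" "e \<in> S (Suc i)" "F \<subseteq> E"
  shows "r (insert e (prefix i) \<union> F) = r (prefix (Suc i) \<union> F)"
  using assms class_subset[of "Suc i"] prefix_subset[of "Suc i"] prefix_Suc[of i]
  by (intro rank_Un_cong rank_step(2)) auto

lemma rank_contraction_jump:
  assumes sub: "P' \<subseteq> P" and F: "\<Union>P' = E - F" "F \<subseteq> E" and card: "card P' = r E - r F"
    and "i < n" "Suc i \<in> subfamily_indices P'"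
  shows "r (prefix (Suc i) \<union> F) = r (prefix i \<union> F) + 1"
proof -
  let ?J = "subfamily_indices P'"
  define h where "h i = r (prefix i \<union> F)" for i
  have upper: "h (Suc i) \<le> h i + of_bool (Suc i \<in> ?J)" if i: "i < n" for i
  proof (cases "Suc i \<in> ?J")
    case True
    obtain e where e: "e \<in> S (Suc i)" using class_nonempty[of "Suc i"] i by auto
    have "r (insert e (prefix i \<union> F)) \<le> h i + 1"
      unfolding h_def using e class_subset[of "Suc i"] prefix_subset[of i] F i
      by (intro rank_insert_le) auto
    then show ?thesis using rank_insert_prefix_Un[OF i e F(2)] True by (simp add: h_def)
  next
    case False
    then have "S (Suc i) \<subseteq> F"
      using class_disjoint_subfamily[OF sub, of "Suc i"] class_subset[of "Suc i"] i F by auto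
    then have "prefix (Suc i) \<union> F = prefix i \<union> F" using prefix_Suc[of i] by blast
    then show ?thesis by (simp add: h_def)
  qed
  have "h 0 = r F" "h n = r E" "r F \<le> r E"
    using F by (auto simp: h_def prefix_0 prefix_n Un_absorb2 intro: rank_mono)
  then have "h 0 + (\<Sum>i<n. of_bool (Suc i \<in> ?J)) \<le> h n"
    using sum_subfamily_indicator[OF sub] card by simp
  from increments_eq_of_upper_bounds[of n h "\<lambda>i. of_bool (Suc i \<in> ?J)", OF upper this assms(5)]
  show ?thesis using assms(6) by (simp add: h_def)
qed

lemma rank_standard_contraction:
  assumes sub: "P' \<subseteq> P" and F: "\<Union>P' = E - F" "F \<subseteq> E" and card: "card P' = r E - r F"
  shows "rank_standard (E - F) (contract_rank r F) P'"
proof (rule rank_standard_subfamily[OF sub])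
  show "card P' = contract_rank r F (E - F)"
    using card F(2) by (simp add: contract_rank_def Un_absorb2)
  fix i assume i: "i < n" "Suc i \<in> subfamily_indices P'"
  have "prefix (Suc i) \<inter> (E - F) - S (Suc i) = prefix i \<inter> (E - F)" using prefix_Suc_diff[OF i(1)] by blast
  moreover have "X \<inter> (E - F) \<union> F = X \<union> F" if "X \<subseteq> E" for X using that F(2) by blast
  moreover have "insert e (prefix i \<inter> (E - F)) \<union> F = insert e (prefix i) \<union> F" for e
    using prefix_subset[of i] i(1) F(2) by auto
  moreover have "r F \<le> r (prefix i \<union> F)" using prefix_subset[of i] i(1) F(2) by (intro rank_mono) auto
  ultimately show "rank_cut (prefix (Suc i) \<inter> \<Union>P') (contract_rank r F) (S (Suc i))"
    unfolding rank_cut_def contract_rank_def F(1)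
    using rank_contraction_jump[OF sub F card i] rank_insert_prefix_Un[OF i(1) _ F(2)]
      prefix_subset[of i] prefix_subset[of "Suc i"] i(1) by simp
qed

end

section \<open>Gluing colorings\<close>

lemma partition_on_Un:
  assumes "partition_on A P" "partition_on B Q" "A \<inter> B = {}"
  shows "partition_on (A \<union> B) (P \<union> Q)" "P \<inter> Q = {}"
proof -
  have P: "\<Union>P = A" "disjoint P" "{} \<notin> P" and Q: "\<Union>Q = B" "disjoint Q" "{} \<notin> Q"
    using assms(1,2) by (auto simp: partition_on_def)
  have cross: "p \<inter> q = {}" if "p \<in> P" "q \<in> Q" for p q
    using that P(1) Q(1) assms(3) by blast
  show "P \<inter> Q = {}"
  proof (rule equals0I)
    fix p assume p: "p \<in> P \<inter> Q"
    then have "p = {}" using cross[of p p] by auto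
    then show False using P(3) p by auto
  qed
  show "partition_on (A \<union> B) (P \<union> Q)"
  proof (rule partition_onI)
    show "\<Union>(P \<union> Q) = A \<union> B" using P(1) Q(1) by blast
    show "{} \<notin> P \<union> Q" using P(3) Q(3) by blast
    show "disjnt p q" if pq: "p \<in> P \<union> Q" "q \<in> P \<union> Q" "p \<noteq> q" for p q
    proof -
      consider "p \<in> P" "q \<in> P" | "p \<in> Q" "q \<in> Q" | "p \<in> P" "q \<in> Q" | "p \<in> Q" "q \<in> P"
        using pq(1,2) by blast
      then have "p \<inter> q = {}"
        by cases (use disjointD[OF P(2)] disjointD[OF Q(2)] cross pq(3) in blast)+
      then show ?thesis by (simp add: disjnt_def)
    qed
  qed
qed

lemma dependent_contains_minimal:
  assumes "finite D" "D \<notin> Ind"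
  obtains C where "C \<subseteq> D" "C \<notin> Ind" "\<And>x. x \<in> C \<Longrightarrow> C - {x} \<in> Ind"
proof -
  let ?M = "{C. C \<subseteq> D \<and> C \<notin> Ind}"
  have "?M \<subseteq> Pow D" by blast
  moreover have "finite (Pow D)" using assms(1) by simp
  ultimately have "finite ?M" by (rule finite_subset)
  moreover have "?M \<noteq> {}" using assms(2) by blast
  ultimately obtain C where C: "C \<in> ?M" and min: "\<forall>C'\<in>?M. C' \<subseteq> C \<longrightarrow> C = C'"
    using finite_has_minimal[of ?M] by blast
  have minimal: "C - {x} \<in> Ind" if x: "x \<in> C" for x
  proof (rule ccontr)
    assume "C - {x} \<notin> Ind"
    then have "C = C - {x}" using min C by blast
    then show False using x by blast
  qed
  show thesis using that[of C] C minimal by blast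
qed

context rank_function
begin

lemma rainbow_circuit_free_Un:
  assumes F: "F \<subseteq> G"
    and PF: "rainbow_circuit_free F (rank_indep F \<rho>) PF"
    and Q: "rainbow_circuit_free (G - F) (rank_indep (G - F) (contract_rank \<rho> F)) Q"
  shows "rainbow_circuit_free G (rank_indep G \<rho>) (PF \<union> Q)"
  unfolding rainbow_circuit_free_def
proof
  assume "\<exists>C. circuit G (rank_indep G \<rho>) C \<and> (\<forall>S\<in>PF \<union> Q. card (C \<inter> S) \<le> 1)"
  then obtain C where circ: "circuit G (rank_indep G \<rho>) C"
    and rainbow: "\<forall>S\<in>PF \<union> Q. card (C \<inter> S) \<le> 1" by blast
  have C: "C \<subseteq> G" "\<rho> C \<noteq> card C" "\<And>x. x \<in> C \<Longrightarrow> \<rho> (C - {x}) = card (C - {x})"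
    using circ by (auto simp: circuit_def rank_indep_def)
  have "finite C" using C(1) finite_ground by (rule finite_subset)
  show False
  proof (cases "C \<subseteq> F")
    case True
    then have "circuit F (rank_indep F \<rho>) C"
      using C by (auto simp: circuit_def rank_indep_def)
    then show False using PF rainbow unfolding rainbow_circuit_free_def by blast
  next
    case False
    then obtain x where x: "x \<in> C" "x \<notin> F" by blast
    let ?D = "C - F"
    have "C \<inter> F \<subseteq> C - {x}" using x by blast
    moreover have "C - {x} \<in> rank_indep G \<rho>" using C(1) C(3)[OF x(1)] by (auto simp: rank_indep_def)
    ultimately have "C \<inter> F \<in> rank_indep G \<rho>" using rank_indep_subset by blast
    then have indep_part: "\<rho> (C \<inter> F) = card (C \<inter> F)" by (simp add: rank_indep_def)
    have card_split: "card C = card (C \<inter> F) + card ?D"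
      using card_Un_disjoint[of "C \<inter> F" ?D] \<open>finite C\<close> by (simp add: Int_Diff_Un Int_Diff_disjoint)
    have submod: "\<rho> (C \<union> F) + \<rho> (C \<inter> F) \<le> \<rho> C + \<rho> F" using C(1) F by (rule rank_submod)
    have "\<rho> C \<le> card C" using C(1) by (rule rank_le_card)
    moreover have "\<rho> F \<le> \<rho> (C \<union> F)" using C(1) F by (intro rank_mono) auto
    moreover have "?D \<union> F = C \<union> F" by blast
    ultimately have "contract_rank \<rho> F ?D \<noteq> card ?D"
      using C(2) indep_part card_split submod unfolding contract_rank_def by simp
    then have dependent: "?D \<notin> rank_indep (G - F) (contract_rank \<rho> F)" by (simp add: rank_indep_def)
    have "finite ?D" using \<open>finite C\<close> by simp
    obtain C' where C': "C' \<subseteq> ?D" "C' \<notin> rank_indep (G - F) (contract_rank \<rho> F)"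
      "\<And>y. y \<in> C' \<Longrightarrow> C' - {y} \<in> rank_indep (G - F) (contract_rank \<rho> F)"
      using dependent_contains_minimal[OF \<open>finite ?D\<close> dependent] by blast
    have "circuit (G - F) (rank_indep (G - F) (contract_rank \<rho> F)) C'"
      using C' C(1) by (auto simp: circuit_def)
    moreover have "card (C' \<inter> S) \<le> 1" if S: "S \<in> Q" for S
    proof -
      have "card (C' \<inter> S) \<le> card (C \<inter> S)" using \<open>finite C\<close> C'(1) by (intro card_mono) auto
      moreover have "card (C \<inter> S) \<le> 1" using rainbow S by blast
      ultimately show ?thesis by linarith
    qed
    ultimately show False using Q unfolding rainbow_circuit_free_def by blast
  qed
qed

lemma has_nonstandard_coloring_Un:
  assumes F: "F \<subseteq> G"
    and PF: "partition_on F PF" "rainbow_circuit_free F (rank_indep F \<rho>) PF" "card PF = \<rho> F"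
    and Q: "partition_on (G - F) Q" "rainbow_circuit_free (G - F) (rank_indep (G - F) (contract_rank \<rho> F)) Q"
      "card Q = \<rho> G - \<rho> F"
    and nonstandard: "\<not> rank_standard F \<rho> PF \<or> \<not> rank_standard (G - F) (contract_rank \<rho> F) Q"
  shows "has_nonstandard_rp_rcf_coloring G (rank_indep G \<rho>)"
  unfolding has_nonstandard_coloring_iff
proof (intro exI conjI)
  have "F \<union> (G - F) = G" using F by blast
  then show partition: "partition_on G (PF \<union> Q)" using partition_on_Un[OF PF(1) Q(1)] by simp
  show "rainbow_circuit_free G (rank_indep G \<rho>) (PF \<union> Q)"
    using F PF(2) Q(2) by (rule rainbow_circuit_free_Un)
  have "finite PF" using finite_elements[OF finite_subset[OF F finite_ground] PF(1)] .
  moreover have "finite Q" using finite_elements[OF _ Q(1)] finite_ground by simp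
  moreover have "\<rho> F \<le> \<rho> G" using F by (rule rank_mono) simp
  ultimately show "card (PF \<union> Q) = \<rho> G"
    using card_Un_disjoint[OF \<open>finite PF\<close> \<open>finite Q\<close> partition_on_Un(2)[OF PF(1) Q(1)]] PF(3) Q(3)
    by simp
  show "\<not> rank_standard G \<rho> (PF \<union> Q)"
  proof
    assume "rank_standard G \<rho> (PF \<union> Q)"
    then obtain S where "bij_betw S {1..\<rho> G} (PF \<union> Q)"
      "\<And>i. i \<in> {1..\<rho> G} \<Longrightarrow> rank_cut (\<Union>(S ` {1..i})) \<rho> (S i)"
      unfolding rank_standard_def by blast
    then interpret standard_order G \<rho> "PF \<union> Q" S "\<rho> G"
      using partition by unfold_locales
    have "rank_standard F \<rho> PF"
      using PF(1,3) by (intro rank_standard_restriction) (auto simp: partition_on_def)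
    moreover have "rank_standard (G - F) (contract_rank \<rho> F) Q"
      using Q(1,3) F by (intro rank_standard_contraction) (auto simp: partition_on_def)
    ultimately show False using nonstandard by blast
  qed
qed

lemma has_nonstandard_coloring_if_restriction_or_contraction:
  assumes F: "F \<subseteq> G"
    and loopless: "\<And>e. e \<in> F \<Longrightarrow> \<rho> {e} \<noteq> 0"
    and flat: "\<And>e. e \<in> G - F \<Longrightarrow> \<rho> F < \<rho> (insert e F)"
    and "has_nonstandard_rp_rcf_coloring F (rank_indep F \<rho>) \<or>
      has_nonstandard_rp_rcf_coloring (G - F) (rank_indep (G - F) (contract_rank \<rho> F))"
  shows "has_nonstandard_rp_rcf_coloring G (rank_indep G \<rho>)"
proof -
  interpret restriction: rank_function F \<rho> using F by (rule rank_function_subset)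
  interpret contraction: rank_function "G - F" "contract_rank \<rho> F" using F by (rule rank_function_contract)
  have "contract_rank \<rho> F {e} \<noteq> 0" if "e \<in> G - F" for e
    using flat[OF that] by (simp add: contract_rank_def)
  moreover have rank_contraction: "contract_rank \<rho> F (G - F) = \<rho> G - \<rho> F"
    using F by (simp add: contract_rank_def Un_absorb2)
  ultimately obtain Q where Q: "partition_on (G - F) Q" "card Q = \<rho> G - \<rho> F"
    "rainbow_circuit_free (G - F) (rank_indep (G - F) (contract_rank \<rho> F)) Q"
    using contraction.exists_rank_preserving_rainbow_circuit_free by metis
  obtain PF where PF: "partition_on F PF" "card PF = \<rho> F" "rainbow_circuit_free F (rank_indep F \<rho>) PF"
    using restriction.exists_rank_preserving_rainbow_circuit_free[OF loopless] by blast
  from assms(4) show ?thesis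
    unfolding restriction.has_nonstandard_coloring_iff contraction.has_nonstandard_coloring_iff
  proof (elim disjE exE conjE)
    fix PF' assume "partition_on F PF'" "rainbow_circuit_free F (rank_indep F \<rho>) PF'"
      "card PF' = \<rho> F" "\<not> rank_standard F \<rho> PF'"
    then show ?thesis using F Q by (intro has_nonstandard_coloring_Un) auto
  next
    fix Q' assume "partition_on (G - F) Q'"
      "rainbow_circuit_free (G - F) (rank_indep (G - F) (contract_rank \<rho> F)) Q'"
      "card Q' = contract_rank \<rho> F (G - F)" "\<not> rank_standard (G - F) (contract_rank \<rho> F) Q'"
    then show ?thesis using F PF rank_contraction by (intro has_nonstandard_coloring_Un) auto
  qed
qed

end

theorem lemma15:
  fixes E F :: "'a set" and I :: "'a set set"
  assumes "matroid E I" and "loopless E I" and "flat E I F"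
    and "has_nonstandard_rp_rcf_coloring F (restr_indep I F) \<or>
         has_nonstandard_rp_rcf_coloring (E - F) (contr_indep E I F)"
  shows "has_nonstandard_rp_rcf_coloring E I"
proof -
  define r where "r = mrank I"
  interpret rank_function E r unfolding r_def using assms(1) by (rule matroid_rank_function)
  have I: "I = rank_indep E r" unfolding r_def using assms(1) by (rule matroid_eq_rank_indep)
  have F: "F \<subseteq> E" using assms(3) by (simp add: flat_def)
  have "r {e} \<noteq> 0" if "e \<in> F" for e
  proof -
    have "{e} \<in> I" using assms(2) that F by (auto simp: loopless_def)
    then show ?thesis using that F by (simp add: I rank_indep_def)
  qed
  moreover have "r F < r (insert e F)" if "e \<in> E - F" for e
    using assms(3) that by (simp add: flat_def r_def)
  ultimately show ?thesis
    using assms(4) F unfolding I restr_indep_rank_indep[OF F] contr_indep_rank_indep[OF F]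
    by (intro has_nonstandard_coloring_if_restriction_or_contraction)
qed

end
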